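(* Let $x_1,\dots,x_N\in\mathbb{R}^q$, let $d:\mathbb{R}^q\times\mathbb{R}^q\to\mathbb{R}_{\ge 0}$ be any function, and let $k:\mathbb{R}_{\ge0}\to\mathbb{R}_{\ge0}$ be convex, non-increasing and differentiable, with $g=-k'$. Set $f(x)=\sum_{i=1}^N k(d(x,x_i))$. Let $(\hat x_n)_{n\ge0}$ satisfy: $\hat x_0\in\mathbb{R}^q$ arbitrary and, for each $n$, $\hat x_{n+1}\in\operatorname{argmin}_{x\in\mathbb{R}^q}\sum_{i=1}^N g(d(\hat x_n,x_i))\,d(x,x_i)$ (assume these minimizers exist). Then the sequence $n\mapsto f(\hat x_n)$ is non-decreasing and bounded above, hence convergent. *)

theory Defs
  imports "HOL-Analysis.Analysis"
begin

end

theory Submission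
  imports Defs
begin

text \<open>This is a majorize-minimize argument. By convexity, k lies above its tangent at d(x_n, x_i),
  so f(x_{n+1}) - f(x_n) is at least the sum of g(d(x_n, x_i)) (d(x_n, x_i) - d(x_{n+1}, x_i)),
  which is non-negative because x_{n+1} minimizes the weighted sum with these weights.
  Since k is non-increasing, f is bounded by N k(0), and a bounded monotone real sequence
  converges.\<close>

lemma convex_on_above_tangent_right:
  fixes f :: "real \<Rightarrow> real"
  assumes convex: "convex_on A f" and connected: "connected A"
    and c: "c \<in> A" and x: "x \<in> A" and xc: "c < x"
    and deriv: "(f has_real_derivative f') (at c within A)"
  shows "f' * (x - c) \<le> f x - f c"
proof -
  have sub: "{c<..x} \<subseteq> A"
    using connected_contains_Icc[OF connected c x] by auto
  have "((\<lambda>y. (f y - f c) / (y - c)) \<longlongrightarrow> f') (at c within {c<..x})"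
    using deriv sub by (simp add: has_field_derivative_iff tendsto_within_subset)
  moreover have "at c within {c<..x} \<noteq> bot"
    using xc by (subst at_within_eq_bot_iff) (auto simp: closure_greaterThanAtMost)
  moreover have "\<forall>\<^sub>F y in at c within {c<..x}. (f y - f c) / (y - c) \<le> (f x - f c) / (x - c)"
    unfolding eventually_at_filter
  proof (intro always_eventually allI impI)
    fix y assume y: "y \<in> {c<..x}"
    have "f y \<le> (f x - f c) / (x - c) * (y - c) + f c"
      using y connected_contains_Icc[OF connected c x]
      by (intro convex_onD_Icc' convex_on_subset[OF convex]) auto
    then show "(f y - f c) / (y - c) \<le> (f x - f c) / (x - c)"
      using y by (simp add: field_split_simps)
  qed
  ultimately have "f' \<le> (f x - f c) / (x - c)"
    by (simp add: tendsto_upperbound)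
  then show ?thesis
    using xc by (simp add: field_simps)
qed

lemma convex_on_above_tangent_left:
  fixes f :: "real \<Rightarrow> real"
  assumes convex: "convex_on A f" and connected: "connected A"
    and c: "c \<in> A" and x: "x \<in> A" and xc: "x < c"
    and deriv: "(f has_real_derivative f') (at c within A)"
  shows "f' * (x - c) \<le> f x - f c"
proof -
  have sub: "{x..<c} \<subseteq> A"
    using connected_contains_Icc[OF connected x c] by auto
  have "((\<lambda>y. (f y - f c) / (y - c)) \<longlongrightarrow> f') (at c within {x..<c})"
    using deriv sub by (simp add: has_field_derivative_iff tendsto_within_subset)
  moreover have "at c within {x..<c} \<noteq> bot"
    using xc by (subst at_within_eq_bot_iff) (auto simp: closure_atLeastLessThan)
  moreover have "\<forall>\<^sub>F y in at c within {x..<c}. (f x - f c) / (x - c) \<le> (f y - f c) / (y - c)"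
    unfolding eventually_at_filter
  proof (intro always_eventually allI impI)
    fix y assume y: "y \<in> {x..<c}"
    have "f y \<le> (f x - f c) / (c - x) * (c - y) + f c"
      using y connected_contains_Icc[OF connected x c]
      by (intro convex_onD_Icc'' convex_on_subset[OF convex]) auto
    then show "(f x - f c) / (x - c) \<le> (f y - f c) / (y - c)"
      using y xc by (simp add: field_split_simps)
  qed
  ultimately have "(f x - f c) / (x - c) \<le> f'"
    by (simp add: tendsto_lowerbound)
  then show ?thesis
    using xc by (simp add: field_simps)
qed

text \<open>Unlike the library's version, the tangent point may lie on the boundary of A,
  where only a one-sided derivative exists.\<close>

lemma convex_on_above_tangent_within:
  fixes f :: "real \<Rightarrow> real"
  assumes "convex_on A f" "connected A" "c \<in> A" "x \<in> A"
    and "(f has_real_derivative f') (at c within A)"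
  shows "f' * (x - c) \<le> f x - f c"
  using convex_on_above_tangent_right[OF assms(1-4) _ assms(5)]
    convex_on_above_tangent_left[OF assms(1-4) _ assms(5)]
  by (cases x c rule: linorder_cases) auto

lemma convex_on_sum_above_tangents:
  fixes f f' :: "real \<Rightarrow> real" and a b :: "'i \<Rightarrow> real"
  assumes "convex_on A f" "connected A"
    and "\<And>t. t \<in> A \<Longrightarrow> (f has_real_derivative f' t) (at t within A)"
    and "\<And>i. i \<in> I \<Longrightarrow> a i \<in> A" "\<And>i. i \<in> I \<Longrightarrow> b i \<in> A"
  shows "(\<Sum>i\<in>I. f' (a i) * (b i - a i)) \<le> (\<Sum>i\<in>I. f (b i)) - (\<Sum>i\<in>I. f (a i))"
proof -
  have "(\<Sum>i\<in>I. f' (a i) * (b i - a i)) \<le> (\<Sum>i\<in>I. f (b i) - f (a i))"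
    using assms by (intro sum_mono convex_on_above_tangent_within) auto
  then show ?thesis
    by (simp add: sum_subtractf)
qed

theorem proposition1:
  fixes N :: nat
    and x :: "nat \<Rightarrow> real ^ 'q"
    and d :: "real ^ 'q \<Rightarrow> real ^ 'q \<Rightarrow> real"
    and k k' g :: "real \<Rightarrow> real"
    and f :: "real ^ 'q \<Rightarrow> real"
    and xh :: "nat \<Rightarrow> real ^ 'q"
  assumes d_nonneg: "\<And>u v. d u v \<ge> 0"
    and k_nonneg: "\<And>t. t \<ge> 0 \<Longrightarrow> k t \<ge> 0"
    and k_convex: "convex_on {0..} k"
    and k_nonincr: "\<And>s t. 0 \<le> s \<Longrightarrow> s \<le> t \<Longrightarrow> k t \<le> k s"
    and k_deriv: "\<And>t. t \<ge> 0 \<Longrightarrow> (k has_real_derivative k' t) (at t within {0..})"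
    and g_def: "\<And>t. g t = - k' t"
    and f_def: "\<And>y. f y = (\<Sum>i<N. k (d y (x i)))"
    and step: "\<And>n y. (\<Sum>i<N. g (d (xh n) (x i)) * d (xh (Suc n)) (x i))
                        \<le> (\<Sum>i<N. g (d (xh n) (x i)) * d y (x i))"
  shows "mono (\<lambda>n. f (xh n)) \<and> bdd_above (range (\<lambda>n. f (xh n)))
         \<and> convergent (\<lambda>n. f (xh n))"
proof -
  have "f (xh n) \<le> f (xh (Suc n))" for n
  proof -
    have "0 \<le> (\<Sum>i<N. k' (d (xh n) (x i)) * (d (xh (Suc n)) (x i) - d (xh n) (x i)))"
      using step[of n "xh n"]
      by (simp add: g_def right_diff_distrib sum_subtractf sum_negf)
    also have "\<dots> \<le> f (xh (Suc n)) - f (xh n)"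
      unfolding f_def
      by (rule convex_on_sum_above_tangents[OF k_convex]) (auto simp: k_deriv d_nonneg)
    finally show ?thesis by simp
  qed
  then have mono: "mono (\<lambda>n. f (xh n))"
    by (rule incseq_SucI)
  have bound: "f (xh n) \<le> real N * k 0" for n
    using sum_mono[of "{..<N}" "\<lambda>i. k (d (xh n) (x i))" "\<lambda>i. k 0"]
    by (simp add: f_def k_nonincr d_nonneg)
  then have "bdd_above (range (\<lambda>n. f (xh n)))"
    by (intro bdd_aboveI[where M = "real N * k 0"]) auto
  moreover have "convergent (\<lambda>n. f (xh n))"
    using incseq_convergent[of "\<lambda>n. f (xh n)" "real N * k 0"] mono bound
    unfolding convergent_def by blast
  ultimately show ?thesis
    using mono by blast
qed

end
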